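(* Let $(x_1,Y_1),\dots,(x_T,Y_T)$ be an arbitrary sequence of examples with $x_t\in\mathbb{R}^d$ and $Y_t\subseteq\mathcal{Y}$, and let $\delta>0$, $\eta>0$. Let $W_1,\dots,W_T$ be the iterates produced by SALT with parameters $\delta,\eta$ on this sequence. Then for any $U_*=[u_*^{(1)},\dots,u_*^{(L+1)}]\in\arg\min_{U\in\mathbb{R}^{d\times(L+1)}}\sum_{t=1}^T f_t(U)$, $$\sum_{t=1}^T\bigl(f_t(W_t)-f_t(U_* )\bigr)\le\Bigl(\frac{Q}{2\eta}+\eta\Bigr)\sum_{i=1}^{L+1}\sum_{j=1}^d\|G^{(i)}_{1:T,j}\|_2+\frac{\delta}{2\eta}\|U_*\|_F^2,$$ where $Q=\max_{i\in[L+1],\,t\in[T]}\|w_t^{(i)}-u_*^{(i)}\|_\infty^2$.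
   Context: Let $L\ge 1$, $d\ge 1$, $[n]=\{1,\dots,n\}$, $\mathcal{Y}=[L]$. A multi-label classifier is a matrix $W=[w^{(1)},\dots,w^{(L+1)}]\in\mathbb{R}^{d\times(L+1)}$ (columns $w^{(i)}\in\mathbb{R}^d$); $\|\cdot\|_F$ is the Frobenius norm. For the $t$-th example $(x_t,Y_t)$, with $x_t\in\mathbb{R}^d$, $Y_t\subseteq\mathcal{Y}$ and $\bar Y_t=\mathcal{Y}\setminus Y_t$, the loss is $$f_t(W)=\frac{1}{|Y_t|}\sum_{i\in Y_t}\max\{0,1-(x_t^\top w^{(i)}-x_t^\top w^{(L+1)})\}+\frac{1}{|\bar Y_t|}\sum_{i\in\bar Y_t}\max\{0,1-(x_t^\top w^{(L+1)}-x_t^\top w^{(i)})\},$$ where a term whose index set is empty is taken to be $0$. Given a current classifier $W_t=[w_t^{(1)},\dots,w_t^{(L+1)}]$, define $a_t^{(i)}=\mathbb{1}[x_t^\top w_t^{(i)}-x_t^\top w_t^{(L+1)}<1]$, $b_t^{(i)}=\mathbb{1}[x_t^\top w_t^{(L+1)}-x_t^\top w_t^{(i)}<1]$, $a_t=\sum_{j\in Y_t}a_t^{(j)}$, $b_t=\sum_{j\in\bar Y_t}b_t^{(j)}$, and $\nabla_t^{(i)}=-\frac{a_t^{(i)}}{|Y_t|}x_t$ if $i\in Y_t$; $\nabla_t^{(i)}=\frac{b_t^{(i)}}{|\bar Y_t|}x_t$ if $i\in\bar Y_t$; $\nabla_t^{(L+1)}=\bigl(\frac{a_t}{|Y_t|}-\frac{b_t}{|\bar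 Y_t|}\bigr)x_t$, where $\frac{a_t}{|Y_t|}$ (resp. $\frac{b_t}{|\bar Y_t|}$) is taken to be $0$ when $Y_t=\emptyset$ (resp. $\bar Y_t=\emptyset$). SALT (second-order adaptive label thresholding) with parameters $\delta>0,\eta>0$: $W_1=0$; at round $t$, compute $\nabla_t^{(i)}$ at the current iterate $W_t$ for all $i\in[L+1]$; let $G^{(i)}_{1:t}=[\nabla_1^{(i)},\dots,\nabla_t^{(i)}]\in\mathbb{R}^{d\times t}$ and let $G^{(i)}_{1:t,j}\in\mathbb{R}^t$ denote its $j$-th row; let $s^{(i)}_t\in\mathbb{R}^d$ with $s^{(i)}_{t,j}=\|G^{(i)}_{1:t,j}\|_2$, and $H_t^{(i)}=\delta I+\mathrm{diag}(s_t^{(i)})$; then $$W_{t+1}=\arg\min_{W}\sum_{i=1}^{L+1}\Bigl(\frac{1}{2\eta}(w^{(i)}-w_t^{(i)})^\top H_t^{(i)}(w^{(i)}-w_t^{(i)})+(\nabla_t^{(i)})^\top w^{(i)}\Bigr),$$ i.e. $w_{t+1}^{(i)}=w_t^{(i)}-\eta (H_t^{(i)})^{-1}\nabla_t^{(i)}$ for all $i\in[L+1]$. *)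

theory Defs
  imports "HOL-Analysis.Analysis"
begin

text \<open>Vectors in R^d are \<open>real ^ 'd\<close>; a classifier W is a function from column
  indices to vectors, where only the columns 1..L+1 are relevant. Labels are {1..L}.\<close>

definition hinge :: "real \<Rightarrow> real" where
  "hinge z = max 0 (1 - z)"

definition compl_labels :: "nat \<Rightarrow> nat set \<Rightarrow> nat set" where
  "compl_labels L Y = {1..L} - Y"

definition ml_loss :: "nat \<Rightarrow> real ^ 'd \<Rightarrow> nat set \<Rightarrow> (nat \<Rightarrow> real ^ 'd) \<Rightarrow> real" where
  "ml_loss L x Y W =
     (if Y = {} then 0 else
        (1 / real (card Y)) * (\<Sum>i\<in>Y. hinge (x \<bullet> W i - x \<bullet> W (L+1))))
   + (if compl_labels L Y = {} then 0 else
        (1 / real (card (compl_labels L Y))) *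
          (\<Sum>i\<in>compl_labels L Y. hinge (x \<bullet> W (L+1) - x \<bullet> W i)))"

definition ind_a :: "nat \<Rightarrow> real ^ 'd \<Rightarrow> (nat \<Rightarrow> real ^ 'd) \<Rightarrow> nat \<Rightarrow> real" where
  "ind_a L x W i = (if x \<bullet> W i - x \<bullet> W (L+1) < 1 then 1 else 0)"

definition ind_b :: "nat \<Rightarrow> real ^ 'd \<Rightarrow> (nat \<Rightarrow> real ^ 'd) \<Rightarrow> nat \<Rightarrow> real" where
  "ind_b L x W i = (if x \<bullet> W (L+1) - x \<bullet> W i < 1 then 1 else 0)"

definition ml_grad :: "nat \<Rightarrow> real ^ 'd \<Rightarrow> nat set \<Rightarrow> (nat \<Rightarrow> real ^ 'd) \<Rightarrow> nat \<Rightarrow> real ^ 'd" where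
  "ml_grad L x Y W i =
     (if i \<in> Y then (- ind_a L x W i / real (card Y)) *\<^sub>R x
      else if i \<in> compl_labels L Y then (ind_b L x W i / real (card (compl_labels L Y))) *\<^sub>R x
      else if i = L + 1 then
        ((if Y = {} then 0 else (\<Sum>j\<in>Y. ind_a L x W j) / real (card Y))
         - (if compl_labels L Y = {} then 0 else
              (\<Sum>j\<in>compl_labels L Y. ind_b L x W j) / real (card (compl_labels L Y)))) *\<^sub>R x
      else 0)"

text \<open>Euclidean norm of the j-th row of G^{(i)}_{1:t}, given the iterate sequence W.\<close>
definition row_norm :: "nat \<Rightarrow> (nat \<Rightarrow> real ^ 'd) \<Rightarrow> (nat \<Rightarrow> nat set) \<Rightarrow> (nat \<Rightarrow> nat \<Rightarrow> real ^ 'd)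
    \<Rightarrow> nat \<Rightarrow> nat \<Rightarrow> 'd \<Rightarrow> real" where
  "row_norm L x Y W t i j = sqrt (\<Sum>k=1..t. ((ml_grad L (x k) (Y k) (W k) i) $ j)\<^sup>2)"

definition salt_iterates :: "real \<Rightarrow> real \<Rightarrow> nat \<Rightarrow> nat \<Rightarrow> (nat \<Rightarrow> real ^ 'd) \<Rightarrow> (nat \<Rightarrow> nat set)
    \<Rightarrow> (nat \<Rightarrow> nat \<Rightarrow> real ^ 'd) \<Rightarrow> bool" where
  "salt_iterates \<delta> \<eta> L T x Y W \<longleftrightarrow>
     (\<forall>i\<in>{1..L+1}. W 1 i = 0) \<and>
     (\<forall>t\<in>{1..<T}. \<forall>i\<in>{1..L+1}.
        W (Suc t) i = (\<chi> j. W t i $ j - \<eta> * (ml_grad L (x t) (Y t) (W t) i $ j)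
                                 / (\<delta> + row_norm L x Y W t i j)))"

definition linf_norm :: "real ^ 'd \<Rightarrow> real" where
  "linf_norm v = Max (range (\<lambda>j. \<bar>v $ j\<bar>))"

definition frob_sq :: "nat \<Rightarrow> (nat \<Rightarrow> real ^ 'd) \<Rightarrow> real" where
  "frob_sq L U = (\<Sum>i=1..L+1. (norm (U i))\<^sup>2)"

end

theory Submission
  imports Defs
begin

text \<open>Each hinge term is convex and \<open>ml_grad\<close> is a subgradient of the loss at the current
  iterate, so the regret is at most the linearised regret \<open>\<Sum>t. \<nabla>t \<bullet> (W t - U)\<close>. This splits into
  independent scalar problems, one per column \<open>i\<close> and coordinate \<open>j\<close>, on each of which SALT is the
  AdaGrad step \<open>w (t+1) = w t - \<eta> g t / (\<delta> + sqrt (S t))\<close> with \<open>S t = \<Sum>k\<le>t. (g k)\<^sup>2\<close>. The potential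
  \<open>(\<delta> + sqrt (S t)) (w (t+1) - u)\<^sup>2 / (2\<eta>)\<close> then telescopes, because
  \<open>g\<^sup>2 / (2 (\<delta> + sqrt (S + g\<^sup>2))) \<le> sqrt (S + g\<^sup>2) - sqrt S\<close>.\<close>

lemma norm_vec_power2: "(norm (x :: real ^ 'd))\<^sup>2 = (\<Sum>j\<in>UNIV. (x $ j)\<^sup>2)"
  unfolding power2_norm_eq_inner by (simp add: inner_vec_def power2_eq_square)

lemma sqrt_increment_ge:
  fixes S g \<delta> :: real
  assumes "S \<ge> 0" "\<delta> > 0"
  shows "g\<^sup>2 / (2 * (\<delta> + sqrt (S + g\<^sup>2))) \<le> sqrt (S + g\<^sup>2) - sqrt S"
proof -
  let ?a = "sqrt (S + g\<^sup>2)" and ?b = "sqrt S"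
  have "?b \<le> ?a" using assms by simp
  have "g\<^sup>2 = (?a - ?b) * (?a + ?b)"
    using assms(1) by (simp add: algebra_simps flip: power2_eq_square)
  also have "\<dots> \<le> (?a - ?b) * (2 * (\<delta> + ?a))"
    using \<open>?b \<le> ?a\<close> assms(2) by (simp add: mult_left_mono del: real_sqrt_le_iff)
  finally show ?thesis
    using assms by (simp add: divide_le_eq add_pos_nonneg)
qed

lemma adagrad_potential_step:
  fixes S g a Q \<delta> \<eta> :: real
  assumes "S \<ge> 0" "\<delta> > 0" "\<eta> > 0" "a\<^sup>2 \<le> Q"
  defines "h \<equiv> \<delta> + sqrt S" and "h' \<equiv> \<delta> + sqrt (S + g\<^sup>2)"
  shows "g * a + h' * (a - \<eta> * g / h')\<^sup>2 / (2 * \<eta>)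
    \<le> h * a\<^sup>2 / (2 * \<eta>) + (Q / (2 * \<eta>) + \<eta>) * (h' - h)"
proof -
  have "h' > 0" using assms(1,2) by (simp add: h'_def add_pos_nonneg)
  have "h \<le> h'" using assms(1) by (simp add: h_def h'_def)
  have "g * a + h' * (a - \<eta> * g / h')\<^sup>2 / (2 * \<eta>)
      = h * a\<^sup>2 / (2 * \<eta>) + (h' - h) * a\<^sup>2 / (2 * \<eta>) + \<eta> * (g\<^sup>2 / (2 * h'))"
    using \<open>h' > 0\<close> assms(3) by (simp add: field_simps power2_eq_square)
  also have "(h' - h) * a\<^sup>2 / (2 * \<eta>) \<le> (h' - h) * Q / (2 * \<eta>)"
    using \<open>h \<le> h'\<close> assms(3,4) by (intro divide_right_mono mult_left_mono) auto
  also have "\<eta> * (g\<^sup>2 / (2 * h')) \<le> \<eta> * (h' - h)"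
    using mult_left_mono[OF sqrt_increment_ge[OF assms(1,2), of g]] assms(3)
    by (simp add: h_def h'_def)
  finally show ?thesis by (simp add: algebra_simps)
qed

lemma adagrad_scalar_regret:
  fixes g w :: "nat \<Rightarrow> real" and u \<delta> \<eta> Q :: real
  assumes "\<delta> > 0" and "\<eta> > 0" and "w 1 = 0"
    and update: "\<And>t. t \<in> {1..<T} \<Longrightarrow>
        w (Suc t) = w t - \<eta> * g t / (\<delta> + sqrt (\<Sum>k=1..t. (g k)\<^sup>2))"
    and Q: "\<And>t. t \<in> {1..T} \<Longrightarrow> (w t - u)\<^sup>2 \<le> Q"
  shows "(\<Sum>t=1..T. g t * (w t - u))
    \<le> (Q / (2 * \<eta>) + \<eta>) * sqrt (\<Sum>t=1..T. (g t)\<^sup>2) + \<delta> / (2 * \<eta>) * u\<^sup>2"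
proof -
  define S where "S n = (\<Sum>k=1..n. (g k)\<^sup>2)" for n
  define h where "h n = \<delta> + sqrt (S n)" for n
  define R where "R n = (Q / (2 * \<eta>) + \<eta>) * sqrt (S n) + \<delta> / (2 * \<eta>) * u\<^sup>2" for n
  \<comment> \<open>the iterate the update rule would produce after round \<open>n\<close>, also for \<open>n = T\<close>\<close>
  define v where "v n = (if n = 0 then w 1 else w n - \<eta> * g n / h n)" for n
  have S_nonneg: "S n \<ge> 0" for n
    unfolding S_def by (simp add: sum_nonneg)
  have potential: "(\<Sum>t=1..n. g t * (w t - u)) + h n * (v n - u)\<^sup>2 / (2 * \<eta>) \<le> R n"
    if "n \<le> T" for n
    using that
  proof (induction n)
    case 0
    then show ?case using \<open>w 1 = 0\<close> by (simp add: v_def h_def S_def R_def power2_eq_square)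
  next
    case (Suc n)
    have w_next: "w (Suc n) = v n"
      using update[of n] Suc.prems by (auto simp: v_def h_def S_def)
    have "(w (Suc n) - u)\<^sup>2 \<le> Q"
      using Q[of "Suc n"] Suc.prems by simp
    from adagrad_potential_step[OF S_nonneg \<open>\<delta> > 0\<close> \<open>\<eta> > 0\<close> this, of "g (Suc n)"]
    have "g (Suc n) * (w (Suc n) - u) + h (Suc n) * (v (Suc n) - u)\<^sup>2 / (2 * \<eta>)
        \<le> h n * (v n - u)\<^sup>2 / (2 * \<eta>) + (Q / (2 * \<eta>) + \<eta>) * (h (Suc n) - h n)"
      by (simp add: w_next v_def h_def S_def algebra_simps)
    with Suc.IH Suc.prems show ?case
      by (simp add: R_def h_def algebra_simps)
  qed
  have "h T * (v T - u)\<^sup>2 / (2 * \<eta>) \<ge> 0"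
    using \<open>\<delta> > 0\<close> \<open>\<eta> > 0\<close> S_nonneg[of T] by (simp add: h_def)
  with potential[of T] show ?thesis
    by (simp add: R_def S_def)
qed

lemma hinge_diff_le: "hinge z - hinge z' \<le> (if z < 1 then 1 else 0) * (z' - z)"
  unfolding hinge_def by auto

lemma mean_hinge_diff_le:
  fixes z z' :: "'a \<Rightarrow> real"
  assumes "finite A"
  shows "(if A = {} then 0 else 1 / real (card A) * (\<Sum>i\<in>A. hinge (z i)))
       - (if A = {} then 0 else 1 / real (card A) * (\<Sum>i\<in>A. hinge (z' i)))
     \<le> (\<Sum>i\<in>A. (if z i < 1 then 1 else 0) / real (card A) * (z' i - z i))"
proof (cases "A = {}")
  case False
  have "1 / real (card A) * (\<Sum>i\<in>A. hinge (z i)) - 1 / real (card A) * (\<Sum>i\<in>A. hinge (z' i))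
      = 1 / real (card A) * (\<Sum>i\<in>A. hinge (z i) - hinge (z' i))"
    by (simp add: sum_subtractf right_diff_distrib)
  also have "\<dots> \<le> 1 / real (card A) * (\<Sum>i\<in>A. (if z i < 1 then 1 else 0) * (z' i - z i))"
    by (intro mult_left_mono sum_mono hinge_diff_le) simp
  also have "\<dots> = (\<Sum>i\<in>A. (if z i < 1 then 1 else 0) / real (card A) * (z' i - z i))"
    by (auto simp: sum_distrib_left intro!: sum.cong)
  finally show ?thesis
    using False by simp
qed simp

lemma inner_ml_grad_sum:
  assumes "Y \<subseteq> {1..L}"
  defines "C \<equiv> compl_labels L Y"
  shows "(\<Sum>i=1..L+1. ml_grad L x Y W i \<bullet> v i)
    = (\<Sum>i\<in>Y. ind_a L x W i / real (card Y) * (x \<bullet> v (L+1) - x \<bullet> v i))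
    + (\<Sum>i\<in>C. ind_b L x W i / real (card C) * (x \<bullet> v i - x \<bullet> v (L+1)))"
proof -
  have "finite Y" using assms(1) finite_subset by blast
  have "finite C" by (simp add: C_def compl_labels_def)
  have "{1..L+1} = Y \<union> C \<union> {L+1}" "Y \<inter> C = {}" "L+1 \<notin> Y \<union> C"
    using assms(1) by (auto simp: C_def compl_labels_def)
  then have "(\<Sum>i=1..L+1. ml_grad L x Y W i \<bullet> v i)
      = (\<Sum>i\<in>Y. ml_grad L x Y W i \<bullet> v i) + (\<Sum>i\<in>C. ml_grad L x Y W i \<bullet> v i)
        + ml_grad L x Y W (L+1) \<bullet> v (L+1)"
    using \<open>finite Y\<close> \<open>finite C\<close> by (simp add: sum.union_disjoint)
  also have "\<dots> = (\<Sum>i\<in>Y. - ind_a L x W i / real (card Y) * (x \<bullet> v i))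
      + (\<Sum>i\<in>C. ind_b L x W i / real (card C) * (x \<bullet> v i))
      + ((\<Sum>i\<in>Y. ind_a L x W i) / real (card Y) - (\<Sum>i\<in>C. ind_b L x W i) / real (card C))
        * (x \<bullet> v (L+1))"
    using \<open>Y \<inter> C = {}\<close> \<open>L+1 \<notin> Y \<union> C\<close>
    by (auto simp: ml_grad_def C_def compl_labels_def intro!: sum.cong)
  also have "(\<Sum>i\<in>Y. - ind_a L x W i / real (card Y) * (x \<bullet> v i))
      = (\<Sum>i\<in>Y. ind_a L x W i / real (card Y) * (x \<bullet> v (L+1) - x \<bullet> v i))
        - (\<Sum>i\<in>Y. ind_a L x W i) / real (card Y) * (x \<bullet> v (L+1))"
    by (simp add: sum_subtractf sum_negf sum_distrib_left sum_divide_distrib algebra_simps)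
  also have "(\<Sum>i\<in>C. ind_b L x W i / real (card C) * (x \<bullet> v i))
      = (\<Sum>i\<in>C. ind_b L x W i / real (card C) * (x \<bullet> v i - x \<bullet> v (L+1)))
        + (\<Sum>i\<in>C. ind_b L x W i) / real (card C) * (x \<bullet> v (L+1))"
    by (simp add: sum_subtractf sum_distrib_left sum_divide_distrib algebra_simps)
  finally show ?thesis
    by (simp add: left_diff_distrib)
qed

lemma ml_loss_diff_le_inner_grad:
  assumes "Y \<subseteq> {1..L}"
  shows "ml_loss L x Y W - ml_loss L x Y U \<le> (\<Sum>i=1..L+1. ml_grad L x Y W i \<bullet> (W i - U i))"
proof -
  define C where "C = compl_labels L Y"
  define e where "e = x \<bullet> (W (L+1) - U (L+1))"
  have "finite Y" using assms finite_subset by blast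
  have "finite C" by (simp add: C_def compl_labels_def)
  have "(\<Sum>i\<in>Y. (if x \<bullet> W i - x \<bullet> W (L+1) < 1 then 1 else 0) / real (card Y)
          * ((x \<bullet> U i - x \<bullet> U (L+1)) - (x \<bullet> W i - x \<bullet> W (L+1))))
      = (\<Sum>i\<in>Y. ind_a L x W i / real (card Y) * (e - x \<bullet> (W i - U i)))"
    by (intro sum.cong) (simp_all add: ind_a_def e_def inner_diff_right)
  with mean_hinge_diff_le[OF \<open>finite Y\<close>,
      of "\<lambda>i. x \<bullet> W i - x \<bullet> W (L+1)" "\<lambda>i. x \<bullet> U i - x \<bullet> U (L+1)"]
  have Y_part: "(if Y = {} then 0 else 1 / real (card Y) * (\<Sum>i\<in>Y. hinge (x \<bullet> W i - x \<bullet> W (L+1))))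
      - (if Y = {} then 0 else 1 / real (card Y) * (\<Sum>i\<in>Y. hinge (x \<bullet> U i - x \<bullet> U (L+1))))
      \<le> (\<Sum>i\<in>Y. ind_a L x W i / real (card Y) * (e - x \<bullet> (W i - U i)))"
    by simp
  have "(\<Sum>i\<in>C. (if x \<bullet> W (L+1) - x \<bullet> W i < 1 then 1 else 0) / real (card C)
          * ((x \<bullet> U (L+1) - x \<bullet> U i) - (x \<bullet> W (L+1) - x \<bullet> W i)))
      = (\<Sum>i\<in>C. ind_b L x W i / real (card C) * (x \<bullet> (W i - U i) - e))"
    by (intro sum.cong) (simp_all add: ind_b_def e_def inner_diff_right)
  with mean_hinge_diff_le[OF \<open>finite C\<close>,
      of "\<lambda>i. x \<bullet> W (L+1) - x \<bullet> W i" "\<lambda>i. x \<bullet> U (L+1) - x \<bullet> U i"]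
  have C_part: "(if C = {} then 0 else 1 / real (card C) * (\<Sum>i\<in>C. hinge (x \<bullet> W (L+1) - x \<bullet> W i)))
      - (if C = {} then 0 else 1 / real (card C) * (\<Sum>i\<in>C. hinge (x \<bullet> U (L+1) - x \<bullet> U i)))
      \<le> (\<Sum>i\<in>C. ind_b L x W i / real (card C) * (x \<bullet> (W i - U i) - e))"
    by simp
  have "(\<Sum>i=1..L+1. ml_grad L x Y W i \<bullet> (W i - U i))
      = (\<Sum>i\<in>Y. ind_a L x W i / real (card Y) * (e - x \<bullet> (W i - U i)))
      + (\<Sum>i\<in>C. ind_b L x W i / real (card C) * (x \<bullet> (W i - U i) - e))"
    unfolding e_def C_def by (rule inner_ml_grad_sum[OF assms])
  with Y_part C_part show ?thesis
    unfolding ml_loss_def C_def[symmetric] by linarith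
qed

lemma component_diff_power2_le_Max_linf:
  fixes W :: "nat \<Rightarrow> nat \<Rightarrow> real ^ 'd" and U :: "nat \<Rightarrow> real ^ 'd"
  assumes "i \<in> {1..L+1}" "t \<in> {1..T}"
  shows "(W t i $ j - U i $ j)\<^sup>2 \<le> Max {(linf_norm (W t i - U i))\<^sup>2 | i t. i \<in> {1..L+1} \<and> t \<in> {1..T}}"
proof -
  have "\<bar>(W t i - U i) $ j\<bar> \<le> linf_norm (W t i - U i)"
    unfolding linf_norm_def by (rule Max_ge) auto
  then have "(W t i $ j - U i $ j)\<^sup>2 \<le> (linf_norm (W t i - U i))\<^sup>2"
    by (metis abs_ge_zero power2_abs power_mono vector_minus_component)
  also have "\<dots> \<le> Max {(linf_norm (W t i - U i))\<^sup>2 | i t. i \<in> {1..L+1} \<and> t \<in> {1..T}}"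
  proof (rule Max_ge)
    have "{(linf_norm (W t i - U i))\<^sup>2 | i t. i \<in> {1..L+1} \<and> t \<in> {1..T}}
        = (\<lambda>(i, t). (linf_norm (W t i - U i))\<^sup>2) ` ({1..L+1} \<times> {1..T})"
      by force
    then show "finite {(linf_norm (W t i - U i))\<^sup>2 | i t. i \<in> {1..L+1} \<and> t \<in> {1..T}}"
      by simp
  qed (use assms in blast)
  finally show ?thesis .
qed

lemma salt_coordinate_regret:
  assumes "\<delta> > 0" "\<eta> > 0" "salt_iterates \<delta> \<eta> L T x Y W" "i \<in> {1..L+1}"
    and "\<And>t. t \<in> {1..T} \<Longrightarrow> (W t i $ j - U i $ j)\<^sup>2 \<le> Q"
  shows "(\<Sum>t=1..T. ml_grad L (x t) (Y t) (W t) i $ j * (W t i $ j - U i $ j))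
    \<le> (Q / (2 * \<eta>) + \<eta>) * row_norm L x Y W T i j + \<delta> / (2 * \<eta>) * (U i $ j)\<^sup>2"
  unfolding row_norm_def
proof (rule adagrad_scalar_regret[OF assms(1,2)])
  show "W 1 i $ j = 0"
    using assms(3,4) by (simp add: salt_iterates_def)
  show "W (Suc t) i $ j = W t i $ j - \<eta> * (ml_grad L (x t) (Y t) (W t) i $ j)
      / (\<delta> + sqrt (\<Sum>k=1..t. (ml_grad L (x k) (Y k) (W k) i $ j)\<^sup>2))" if "t \<in> {1..<T}" for t
    using assms(3,4) that by (simp add: salt_iterates_def row_norm_def)
qed (rule assms(5))

theorem theorem2:
  fixes x :: "nat \<Rightarrow> real ^ 'd" and Y :: "nat \<Rightarrow> nat set"
    and W :: "nat \<Rightarrow> nat \<Rightarrow> real ^ 'd" and Ustar :: "nat \<Rightarrow> real ^ 'd"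
    and L T :: nat and \<delta> \<eta> :: real
  assumes "L \<ge> 1"
    and "\<forall>t\<in>{1..T}. Y t \<subseteq> {1..L}"
    and "\<delta> > 0" and "\<eta> > 0"
    and "salt_iterates \<delta> \<eta> L T x Y W"
    and "\<forall>U :: nat \<Rightarrow> real ^ 'd. (\<Sum>t=1..T. ml_loss L (x t) (Y t) Ustar)
            \<le> (\<Sum>t=1..T. ml_loss L (x t) (Y t) U)"
  shows "(\<Sum>t=1..T. ml_loss L (x t) (Y t) (W t) - ml_loss L (x t) (Y t) Ustar)
    \<le> (Max {(linf_norm (W t i - Ustar i))\<^sup>2 | i t. i \<in> {1..L+1} \<and> t \<in> {1..T}} / (2 * \<eta>) + \<eta>)
        * (\<Sum>i=1..L+1. \<Sum>j\<in>UNIV. row_norm L x Y W T i j)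
      + \<delta> / (2 * \<eta>) * frob_sq L Ustar"
proof -
  define Q where "Q = Max {(linf_norm (W t i - Ustar i))\<^sup>2 | i t. i \<in> {1..L+1} \<and> t \<in> {1..T}}"
  define g where "g t i = ml_grad L (x t) (Y t) (W t) i" for t i
  have "(\<Sum>t=1..T. ml_loss L (x t) (Y t) (W t) - ml_loss L (x t) (Y t) Ustar)
      \<le> (\<Sum>t=1..T. \<Sum>i=1..L+1. g t i \<bullet> (W t i - Ustar i))"
    unfolding g_def by (intro sum_mono ml_loss_diff_le_inner_grad) (use assms(2) in auto)
  also have "\<dots> = (\<Sum>i=1..L+1. \<Sum>j\<in>UNIV. \<Sum>t=1..T. g t i $ j * (W t i $ j - Ustar i $ j))"
    unfolding inner_vec_def vector_minus_component inner_real_def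
    by (subst sum.swap) (rule sum.cong[OF refl], rule sum.swap)
  also have "\<dots> \<le> (\<Sum>i=1..L+1. \<Sum>j\<in>UNIV.
      (Q / (2 * \<eta>) + \<eta>) * row_norm L x Y W T i j + \<delta> / (2 * \<eta>) * (Ustar i $ j)\<^sup>2)"
    unfolding g_def Q_def
    by (intro sum_mono salt_coordinate_regret[OF assms(3-5)] component_diff_power2_le_Max_linf)
  also have "\<dots> = (Q / (2 * \<eta>) + \<eta>) * (\<Sum>i=1..L+1. \<Sum>j\<in>UNIV. row_norm L x Y W T i j)
      + \<delta> / (2 * \<eta>) * frob_sq L Ustar"
    unfolding frob_sq_def norm_vec_power2 by (simp only: sum.distrib flip: sum_distrib_left)
  finally show ?thesis
    unfolding Q_def .
qed

end
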